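(* Let $\mu_1,\mu_2$ form an AT-system on nodes $z_1,\dots,z_N$. Let $(A_{n,1},A_{n,2})$, $1\le n\le N$, be the type I multiple orthogonal polynomials on the step-line, with exact degrees $\deg A_{n,j}=n_j-1$ (where $\vec n=(n_1,n_2)$ is the step-line index of $n$), and suppose they satisfy, for $j=1,2$ and $1\le n\le N-2$, $$xA_{n,j}(x)=A_{n-1,j}(x)+b_{n-1}A_{n,j}(x)+c_nA_{n+1,j}(x)+d_{n+1}A_{n+2,j}(x),$$ with $A_{0,j}\equiv0$, where $b_n,c_n,d_n$ are the coefficients of the step-line recurrence of the monic type II polynomials. Then $d_{n+1}\neq0$ for all $n=1,\dots,N-2$.
   Context: Discrete measures: $\mu_j=\sum_{i=1}^N\alpha_{j,i}\delta_{z_i}$, $j=1,2$, with $\alpha_{j,i}>0$ and distinct real $z_i$; $\Delta\subset\mathbb{R}$ is an interval containing all $z_i$. A system of $n$ linearly independent functions on $\Delta$ is a Chebyshev system if every nontrivial real linear combination has at most $n-1$ zeros in $\Delta$. The measures form an AT-system if there exist continuous functions $\alpha_1,\alpha_2$ on $\Delta$ with $\alpha_j(z_i)=\alpha_{j,i}$ such that for every $(n_1,n_2)$ with $n_1+n_2\le N$ the functions $x^k\alpha_1(x)$ ($0\le k\le n_1-1$), $x^k\alpha_2(x)$ ($0\le k\le n_2-1$) form a Chebyshev system on $\Delta$. Step-line index: $n=2k\mapsto\vec n=(k,k)$, $n=2k+1\mapsto\vec n=(k+1,k)$. Type I MOPs for index $\vec n$: polynomials $A_{\vec n,1},A_{\vec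 n,2}$ with $\deg A_{\vec n,j}\le n_j-1$ such that $\sum_{i=1}^N\big(\alpha_{1,i}A_{\vec n,1}(z_i)+\alpha_{2,i}A_{\vec n,2}(z_i)\big)z_i^k$ equals $0$ for $0\le k\le |\vec n|-2$ and $1$ for $k=|\vec n|-1$; $A_{n,j}:=A_{\vec n,j}$. Monic type II MOP $P_n$: monic of degree $n=|\vec n|$ with $\sum_i\alpha_{j,i}P_n(z_i)z_i^k=0$ for $0\le k\le n_j-1$, $j=1,2$; they satisfy $xP_n=P_{n+1}+b_nP_n+c_nP_{n-1}+d_nP_{n-2}$. *)

theory Defs
  imports "HOL-Analysis.Analysis" "HOL-Computational_Algebra.Polynomial"
begin

definition chebyshev_system :: "real set \<Rightarrow> (real \<Rightarrow> real) list \<Rightarrow> bool" where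
  "chebyshev_system D fs \<longleftrightarrow>
     (\<forall>c::nat \<Rightarrow> real. (\<forall>x\<in>D. (\<Sum>k<length fs. c k * (fs ! k) x) = 0) \<longrightarrow> (\<forall>k<length fs. c k = 0)) \<and>
     (\<forall>c::nat \<Rightarrow> real. (\<exists>k<length fs. c k \<noteq> 0) \<longrightarrow>
        finite {x\<in>D. (\<Sum>k<length fs. c k * (fs ! k) x) = 0} \<and>
        card {x\<in>D. (\<Sum>k<length fs. c k * (fs ! k) x) = 0} \<le> length fs - 1)"

text \<open>AT-system for the discrete measures mu_j = sum_{i=1..N} alpha j i delta_{z i}, j = 1,2.\<close>
definition AT_system :: "real set \<Rightarrow> nat \<Rightarrow> (nat \<Rightarrow> real) \<Rightarrow> (nat \<Rightarrow> nat \<Rightarrow> real) \<Rightarrow> bool" where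
  "AT_system D N z alpha \<longleftrightarrow>
     (\<exists>a1 a2 :: real \<Rightarrow> real. continuous_on D a1 \<and> continuous_on D a2 \<and>
        (\<forall>i\<in>{1..N}. a1 (z i) = alpha 1 i \<and> a2 (z i) = alpha 2 i) \<and>
        (\<forall>n1 n2. n1 + n2 \<le> N \<longrightarrow>
           chebyshev_system D (map (\<lambda>k x. x ^ k * a1 x) [0..<n1] @ map (\<lambda>k x. x ^ k * a2 x) [0..<n2])))"

definition sl :: "nat \<Rightarrow> nat \<Rightarrow> nat" where
  "sl n j = (if j = 1 then (n + 1) div 2 else n div 2)"

definition typeI :: "nat \<Rightarrow> (nat \<Rightarrow> real) \<Rightarrow> (nat \<Rightarrow> nat \<Rightarrow> real) \<Rightarrow> nat \<Rightarrow> (nat \<Rightarrow> real poly) \<Rightarrow> bool" where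
  "typeI N z alpha n A \<longleftrightarrow>
     (\<forall>j\<in>{1,2::nat}. (sl n j = 0 \<longrightarrow> A j = 0) \<and> (sl n j \<ge> 1 \<longrightarrow> degree (A j) \<le> sl n j - 1)) \<and>
     (\<forall>k\<le>n - 1. (\<Sum>i=1..N. (alpha 1 i * poly (A 1) (z i) + alpha 2 i * poly (A 2) (z i)) * z i ^ k)
                  = (if k = n - 1 then 1 else 0))"

definition typeII :: "nat \<Rightarrow> (nat \<Rightarrow> real) \<Rightarrow> (nat \<Rightarrow> nat \<Rightarrow> real) \<Rightarrow> nat \<Rightarrow> real poly \<Rightarrow> bool" where
  "typeII N z alpha n P \<longleftrightarrow>
     degree P = n \<and> lead_coeff P = 1 \<and>
     (\<forall>j\<in>{1,2::nat}. \<forall>k<sl n j. (\<Sum>i=1..N. alpha j i * poly P (z i) * z i ^ k) = 0)"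

end

theory Submission
  imports Defs
begin

text \<open>Along the step-line exactly one component of the multi-index grows at each step, so for
  every n \<ge> 1 some component j satisfies sl (n + 1) j = sl n j \<ge> 1. If d (n + 1) vanished,
  the recurrence for that component would write x * A n j, of exact degree sl n j, as a
  combination of A (n - 1) j, A n j and A (n + 1) j, all of degree at most sl n j - 1.\<close>

lemma sl_mono:
  assumes "m \<le> n"
  shows "sl m j \<le> sl n j"
  using assms by (simp add: sl_def div_le_mono)

lemma sl_Suc_stationary:
  assumes "n \<ge> 1"
  obtains j where "j \<in> {1, 2}" "sl (Suc n) j = sl n j" "sl n j \<ge> 1"
proof (cases "even n")
  case True
  with assms have "sl (Suc n) 2 = sl n 2" "sl n 2 \<ge> 1"
    by (auto simp: sl_def elim!: evenE)
  then show ?thesis using that by blast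
next
  case False
  then have "sl (Suc n) 1 = sl n 1" "sl n 1 \<ge> 1"
    by (auto simp: sl_def elim!: oddE)
  then show ?thesis using that by blast
qed

lemma typeI_degree_le:
  assumes "typeI N z alpha n A" and "j \<in> {1, 2}"
  shows "degree (A j) \<le> sl n j - 1"
  using assms by (cases "sl n j = 0") (auto simp: typeI_def)

lemma x_mult_ne_lower_degree_combination:
  fixes p q r :: "'a::idom poly"
  assumes "p \<noteq> 0" and "degree q \<le> degree p" and "degree r \<le> degree p"
  shows "[:0, 1:] * p \<noteq> q + smult a p + smult b r"
proof
  assume eq: "[:0, 1:] * p = q + smult a p + smult b r"
  have "degree (q + smult a p + smult b r) \<le> degree p"
    using assms(2,3) by (intro degree_add_le degree_smult_le[THEN order_trans]) auto
  moreover have "degree ([:0, 1:] * p) = Suc (degree p)"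
    using assms(1) by (subst degree_mult_eq) auto
  ultimately show False
    using eq by (metis Suc_n_not_le_n)
qed

theorem mainTheorem3:
  fixes N :: nat and D :: "real set" and z :: "nat \<Rightarrow> real" and alpha :: "nat \<Rightarrow> nat \<Rightarrow> real"
    and A :: "nat \<Rightarrow> nat \<Rightarrow> real poly" and P :: "nat \<Rightarrow> real poly"
    and b c d :: "nat \<Rightarrow> real"
  assumes interval: "is_interval D"
    and nodes_in: "\<forall>i\<in>{1..N}. z i \<in> D"
    and nodes_distinct: "inj_on z {1..N}"
    and weights_pos: "\<forall>j\<in>{1,2}. \<forall>i\<in>{1..N}. alpha j i > 0"
    and AT: "AT_system D N z alpha"
    and typeI_A: "\<forall>n\<in>{1..N}. typeI N z alpha n (A n)"
    and exact_deg: "\<forall>n\<in>{1..N}. \<forall>j\<in>{1,2}. sl n j \<ge> 1 \<longrightarrow> A n j \<noteq> 0 \<and> degree (A n j) = sl n j - 1"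
    and A0: "\<forall>j\<in>{1,2}. A 0 j = 0"
    and typeII_P: "\<forall>n\<le>N. typeII N z alpha n (P n)"
    and recII: "\<forall>n<N. [:0, 1:] * P n = P (n + 1) + smult (b n) (P n)
                   + (if n \<ge> 1 then smult (c n) (P (n - 1)) else 0)
                   + (if n \<ge> 2 then smult (d n) (P (n - 2)) else 0)"
    and recI: "\<forall>n\<in>{1..N - 2}. \<forall>j\<in>{1,2}.
                 [:0, 1:] * A n j = A (n - 1) j + smult (b (n - 1)) (A n j)
                   + smult (c n) (A (n + 1) j) + smult (d (n + 1)) (A (n + 2) j)"
  shows "\<forall>n\<in>{1..N - 2}. d (n + 1) \<noteq> 0"
proof
  fix n assume n: "n \<in> {1..N - 2}"
  then obtain j where j: "j \<in> {1, 2}" "sl (Suc n) j = sl n j" "sl n j \<ge> 1"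
    using sl_Suc_stationary by auto
  have A_n: "A n j \<noteq> 0" "degree (A n j) = sl n j - 1"
    using exact_deg n j by auto
  have "degree (A (n + 1) j) \<le> degree (A n j)"
    using typeI_degree_le[of N z alpha "n + 1" "A (n + 1)" j] typeI_A n j A_n by auto
  moreover have "degree (A (n - 1) j) \<le> degree (A n j)"
  proof (cases "n = 1")
    case True
    then show ?thesis using A0 j by auto
  next
    case False
    with n have "n - 1 \<in> {1..N}"
      by auto
    then have "typeI N z alpha (n - 1) (A (n - 1))"
      using typeI_A by blast
    then show ?thesis
      using typeI_degree_le[OF _ j(1)] sl_mono[of "n - 1" n j] A_n(2) by fastforce
  qed
  ultimately show "d (n + 1) \<noteq> 0"
    using x_mult_ne_lower_degree_combination[OF A_n(1)] recI n j by fastforce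
qed

end
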